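(* Consider a sequence of instances of the model below indexed by $n\to\infty$, where $G=G_n$ is an arbitrary (deterministic) graph on $n$ vertices with average degree $d=d_n$ and $\varepsilon=\varepsilon_n\in(0,1/2)$ may depend on $n$. Let $0<\tau<2/3$ be fixed and assume $d\le n^{\tau}$. If exact recovery with high probability is possible, then $$\frac{d}{\log n}\ \ge\ \frac{1-3\tau/2}{D(1/2\,\|\,\varepsilon)}-\frac{1}{\log n}+o\!\left(\frac{1}{D(1/2\,\|\,\varepsilon)}\right).$$ In particular, if $\varepsilon\to 1/2$, this necessary condition implies $$\frac{d}{\log n}\ \ge\ \frac{2(1-3\tau/2)}{(1-2\varepsilon)^2}+o\!\left(\frac{1}{(1-2\varepsilon)^2}\right).$$
   Context: Model: $G=(V,E)$ is a simple undirected graph with $V=[n]$, $m=|E|$, and incidence matrix $B_G\in\{0,1\}^{m\times n}$ ($B_G(e,v)=1$ iff edge $e$ is incident to vertex $v$). An unknown vector $x\in\{0,1\}^n$ (uniform prior) is observed through $Y=B_G x\oplus Z\in\{0,1\}^m$, i.e. $Y_{(i,j)}=x_i\oplus x_j\oplus Z_{(i,j)}$, where all arithmetic is modulo 2 and $Z$ has i.i.d. Bernoulli$(\varepsilon)$ entries, $\varepsilon\in[0,1/2]$. Exact recovery with high probability means there is a decoder (equivalently, the maximum-likelihood decoder) which, from $Y$ (and knowledge of $G,\varepsilon$), outputs an element of $\{x,\ x\oplus 1^n\}$ with probability tending to $1$ as $n\to\infty$. The average degree is $d=2|E|/n$. All logarithms are natural, and $D(1/2\,\|\,\varepsilon)=\tfrac12\log\frac{1}{2\varepsilon}+\tfrac12\log\frac{1}{2(1-\varepsilon)}$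 is the Kullback–Leibler divergence between Bernoulli$(1/2)$ and Bernoulli$(\varepsilon)$. *)

theory Defs
  imports "HOL-Analysis.Analysis" "HOL-Library.Landau_Symbols"
begin

definition simple_graph :: "nat \<Rightarrow> (nat \<times> nat) set \<Rightarrow> bool" where
  "simple_graph n E \<longleftrightarrow> (\<forall>(i,j)\<in>E. i < j \<and> j < n)"

definition avg_degree :: "nat \<Rightarrow> (nat \<times> nat) set \<Rightarrow> real" where
  "avg_degree n E = 2 * real (card E) / real n"

text \<open>The unknown vector x in {0,1}^n is encoded by the set X = {i < n. x_i = 1};
  the noise vector Z by the set of edges where Z_e = 1. The observation
  Y_(i,j) = x_i xor x_j xor Z_(i,j) on edges (set to False off E).\<close>
definition observation :: "(nat \<times> nat) set \<Rightarrow> nat set \<Rightarrow> (nat \<times> nat) set \<Rightarrow> (nat \<times> nat \<Rightarrow> bool)" where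
  "observation E X Z = (\<lambda>(i,j). if (i,j) \<in> E then (((i \<in> X) \<noteq> (j \<in> X)) \<noteq> ((i,j) \<in> Z)) else False)"

text \<open>Probability that decoder dec outputs x or its complement x xor 1^n,
  with x uniform on {0,1}^n and Z i.i.d. Bernoulli(eps) on the edges.\<close>
definition success_prob ::
  "nat \<Rightarrow> (nat \<times> nat) set \<Rightarrow> real \<Rightarrow> ((nat \<times> nat \<Rightarrow> bool) \<Rightarrow> nat set) \<Rightarrow> real" where
  "success_prob n E eps dec =
     (\<Sum>X\<in>Pow {..<n}. \<Sum>Z\<in>Pow E.
        eps ^ card Z * (1 - eps) ^ (card E - card Z) *
        (if dec (observation E X Z) = X \<or> dec (observation E X Z) = {..<n} - X then 1 else 0))
     / 2 ^ n"

definition exact_recovery_whp :: "(nat \<Rightarrow> (nat \<times> nat) set) \<Rightarrow> (nat \<Rightarrow> real) \<Rightarrow> bool" where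
  "exact_recovery_whp G eps \<longleftrightarrow>
     (\<exists>dec :: nat \<Rightarrow> (nat \<times> nat \<Rightarrow> bool) \<Rightarrow> nat set.
        (\<lambda>n. success_prob n (G n) (eps n) (dec n)) \<longlonglongrightarrow> 1)"

definition KL_half :: "real \<Rightarrow> real" where
  "KL_half eps = 1/2 * ln (1 / (2 * eps)) + 1/2 * ln (1 / (2 * (1 - eps)))"

end

theory Submission
  imports Defs
begin

text \<open>Flipping the input at a vertex v together with the noise on all edges at v leaves the
  observation unchanged. On an independent set S these flips commute, so each observation is
  produced by 2^|S| input/noise pairs, and a decoder can be right (up to global complement) on at
  most two of them. Averaging over the noise, the success probability is at most
  2 * prod over v in S of (1 - P_v/2), where P_v is the chance that flipping v does not make
  the noise less likely; a central binomial estimate gives P_v >= exp(-(K+1) D) / (4 sqrt(K+1))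
  when deg v <= K, with D = D(1/2 || eps). For K close to (1+delta) d, a fraction
  delta/(1+delta) of the vertices have degree at most K, and a greedy independent set among them
  has size at least that fraction of n divided by K+1. Succeeding with probability 1/2 therefore
  forces n <= C K^(3/2) exp(K D), i.e. d D >= (1 - 3 tau/2) log n - O(1) when d <= n^tau.\<close>

section \<open>Noise weights and the orbit bound\<close>

definition noise_weight :: "real \<Rightarrow> 'a set \<Rightarrow> 'a set \<Rightarrow> real" where
  "noise_weight e E Z = e ^ card Z * (1 - e) ^ card (E - Z)"

lemma noise_weight_nonneg: "0 \<le> e \<Longrightarrow> e \<le> 1 \<Longrightarrow> 0 \<le> noise_weight e E Z"
  by (simp add: noise_weight_def)

lemma sum_noise_weight:
  assumes "finite E"
  shows "(\<Sum>Z\<in>Pow E. noise_weight e E Z) = 1"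
  using prod_add[OF assms, of "\<lambda>_. e" "\<lambda>_. 1 - e"] by (simp add: noise_weight_def)

lemma sum_Pow_Un_disjoint:
  assumes "finite A" "finite B" "A \<inter> B = {}"
  shows "(\<Sum>Z\<in>Pow (A \<union> B). f Z) = (\<Sum>Y\<in>Pow B. \<Sum>z\<in>Pow A. f (z \<union> Y))"
proof -
  have "bij_betw (\<lambda>(z, Y). z \<union> Y) (Pow A \<times> Pow B) (Pow (A \<union> B))"
    by (rule bij_betwI[where g = "\<lambda>Z. (Z \<inter> A, Z \<inter> B)"]) (use assms in auto)
  then have "(\<Sum>Z\<in>Pow (A \<union> B). f Z) = (\<Sum>(z, Y)\<in>Pow A \<times> Pow B. f (z \<union> Y))"
    by (simp add: sum.reindex_bij_betw[symmetric] case_prod_unfold)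
  also have "\<dots> = (\<Sum>Y\<in>Pow B. \<Sum>z\<in>Pow A. f (z \<union> Y))"
    by (simp add: sum.cartesian_product[symmetric] sum.swap[of _ "Pow A"])
  finally show ?thesis .
qed

lemma sum_Pow_Diff:
  assumes "finite A"
  shows "(\<Sum>z\<in>Pow A. f (A - z)) = (\<Sum>z\<in>Pow A. f z)"
proof -
  have "bij_betw (\<lambda>z. A - z) (Pow A) (Pow A)"
    by (rule bij_betwI[where g = "\<lambda>z. A - z"]) auto
  then show ?thesis by (rule sum.reindex_bij_betw)
qed

lemma sum_Pow_insert:
  assumes "finite S" "a \<notin> S"
  shows "(\<Sum>T\<in>Pow (insert a S). f T) = (\<Sum>T\<in>Pow S. f T) + (\<Sum>T\<in>Pow S. f (insert a T))"
proof -
  have "inj_on (insert a) (Pow S)"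
    using assms(2) by (auto simp: inj_on_def)
  then show ?thesis
    unfolding Pow_insert using assms by (subst sum.union_disjoint) (auto simp: sum.reindex)
qed

lemma sum_noise_weight_Un_disjoint:
  assumes "finite A" "finite B" "A \<inter> B = {}"
  shows "(\<Sum>Z\<in>Pow (A \<union> B). noise_weight e (A \<union> B) Z * f Z)
       = (\<Sum>Y\<in>Pow B. noise_weight e B Y * (\<Sum>z\<in>Pow A. noise_weight e A z * f (z \<union> Y)))"
proof -
  have "noise_weight e (A \<union> B) (z \<union> Y) = noise_weight e A z * noise_weight e B Y"
    if "z \<subseteq> A" "Y \<subseteq> B" for z Y
  proof -
    have "card (z \<union> Y) = card z + card Y"
      using assms that by (intro card_Un_disjoint) (auto intro: finite_subset)
    moreover have "card ((A \<union> B) - (z \<union> Y)) = card (A - z) + card (B - Y)"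
      using assms that by (subst card_Un_disjoint[symmetric]) (auto intro: arg_cong[where f = card])
    ultimately show ?thesis by (simp add: noise_weight_def power_add mult_ac)
  qed
  then show ?thesis
    by (simp add: sum_Pow_Un_disjoint[OF assms] sum_distrib_left mult_ac)
qed

text \<open>Twice the success probability of the best guess between a noise pattern z on A and its
  complement A - z.\<close>
definition flip_max_mass :: "real \<Rightarrow> 'a set \<Rightarrow> real" where
  "flip_max_mass e A = (\<Sum>z\<in>Pow A. max (noise_weight e A z) (noise_weight e A (A - z)))"

lemma flip_max_mass_nonneg: "0 \<le> e \<Longrightarrow> e \<le> 1 \<Longrightarrow> 0 \<le> flip_max_mass e A"
  unfolding flip_max_mass_def by (intro sum_nonneg max.coboundedI1 noise_weight_nonneg)

lemma sum_Pow_noise_weight_le_flip_max: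
  assumes "finite A" "\<And>z. 0 \<le> f z"
  shows "(\<Sum>z\<in>Pow A. noise_weight e A z * f z)
       \<le> (\<Sum>z\<in>Pow A. max (noise_weight e A z) (noise_weight e A (A - z)) * (f z + f (A - z))) / 2"
proof -
  have "2 * (\<Sum>z\<in>Pow A. noise_weight e A z * f z)
      = (\<Sum>z\<in>Pow A. noise_weight e A z * f z + noise_weight e A (A - z) * f (A - z))"
    using sum_Pow_Diff[OF assms(1), of "\<lambda>z. noise_weight e A z * f z"] by (simp add: sum.distrib)
  also have "\<dots> \<le> (\<Sum>z\<in>Pow A. max (noise_weight e A z) (noise_weight e A (A - z)) * (f z + f (A - z)))"
    using assms(2) by (intro sum_mono) (simp add: distrib_left add_mono mult_right_mono)
  finally show ?thesis by simp
qed

lemma sum_noise_weight_Un_le_flip_max: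
  assumes "finite A" "finite B" "A \<inter> B = {}" "\<And>Z. 0 \<le> f Z" "0 \<le> e" "e \<le> 1"
  shows "(\<Sum>Z\<in>Pow (A \<union> B). noise_weight e (A \<union> B) Z * f Z)
       \<le> (\<Sum>z\<in>Pow A. max (noise_weight e A z) (noise_weight e A (A - z))
            * (\<Sum>Y\<in>Pow B. noise_weight e B Y * (f (z \<union> Y) + f ((A - z) \<union> Y)))) / 2"
proof -
  have "(\<Sum>Z\<in>Pow (A \<union> B). noise_weight e (A \<union> B) Z * f Z)
      = (\<Sum>Y\<in>Pow B. noise_weight e B Y * (\<Sum>z\<in>Pow A. noise_weight e A z * f (z \<union> Y)))"
    by (rule sum_noise_weight_Un_disjoint[OF assms(1-3)])
  also have "\<dots> \<le> (\<Sum>Y\<in>Pow B. noise_weight e B Y * ((\<Sum>z\<in>Pow A.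
      max (noise_weight e A z) (noise_weight e A (A - z)) * (f (z \<union> Y) + f ((A - z) \<union> Y))) / 2))"
    using assms by (intro sum_mono mult_left_mono sum_Pow_noise_weight_le_flip_max noise_weight_nonneg)
  also have "\<dots> = (\<Sum>z\<in>Pow A. max (noise_weight e A z) (noise_weight e A (A - z))
      * (\<Sum>Y\<in>Pow B. noise_weight e B Y * (f (z \<union> Y) + f ((A - z) \<union> Y)))) / 2"
    by (simp add: sum_divide_distrib sum_distrib_left mult_ac sum.swap[of _ "Pow B"])
  finally show ?thesis .
qed

lemma sum_Pow_insert_sym_diff:
  assumes "finite S" "a \<notin> S" "z \<subseteq> \<delta> a" "Y \<inter> \<delta> a = {}" "\<And>v. v \<in> S \<Longrightarrow> \<delta> v \<inter> \<delta> a = {}"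
  shows "(\<Sum>T\<in>Pow (insert a S). u (sym_diff (z \<union> Y) (\<Union>(\<delta> ` T))))
       = (\<Sum>T\<in>Pow S. u (z \<union> sym_diff Y (\<Union>(\<delta> ` T))) + u ((\<delta> a - z) \<union> sym_diff Y (\<Union>(\<delta> ` T))))"
proof -
  have "sym_diff (z \<union> Y) U = z \<union> sym_diff Y U"
    "sym_diff (z \<union> Y) (\<delta> a \<union> U) = (\<delta> a - z) \<union> sym_diff Y U" if "U \<inter> \<delta> a = {}" for U
    using that assms(3,4) by blast+
  moreover have "\<Union>(\<delta> ` T) \<inter> \<delta> a = {}" if "T \<subseteq> S" for T
    using that assms(5) by blast
  ultimately show ?thesis
    unfolding sum_Pow_insert[OF assms(1,2)] sum.distrib by simp
qed

text \<open>The orbit argument: if u sums to at most 1 over every orbit of the group of flips of the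
  disjoint blocks \<delta> v, then its expectation under the noise is bounded by a product over the
  blocks.\<close>
lemma noise_expectation_le_prod_flip_max_mass:
  assumes "finite S" "finite E" "\<And>v. v \<in> S \<Longrightarrow> \<delta> v \<subseteq> E" "disjoint_family_on \<delta> S"
    and "\<And>Z. Z \<subseteq> E \<Longrightarrow> (\<Sum>T\<in>Pow S. u (sym_diff Z (\<Union>(\<delta> ` T)))) \<le> 1"
    and "\<And>Z. 0 \<le> u Z" "0 \<le> e" "e \<le> 1"
  shows "(\<Sum>Z\<in>Pow E. noise_weight e E Z * u Z) \<le> (\<Prod>v\<in>S. flip_max_mass e (\<delta> v) / 2)"
  using assms
proof (induction S arbitrary: E u rule: finite_induct)
  case empty
  then have "(\<Sum>Z\<in>Pow E. noise_weight e E Z * u Z) \<le> (\<Sum>Z\<in>Pow E. noise_weight e E Z)"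
    by (intro sum_mono mult_right_le_one_le noise_weight_nonneg) auto
  then show ?case using sum_noise_weight[OF empty.prems(1)] by simp
next
  case (insert a S)
  define A where "A = \<delta> a"
  define E' where "E' = E - A"
  have A: "finite A" "A \<inter> E' = {}" "E = A \<union> E'" "finite E'"
    using insert.prems unfolding A_def E'_def by (auto intro: finite_subset)
  have \<delta>A: "\<delta> v \<inter> A = {}" if "v \<in> S" for v
    using insert.prems(3) insert.hyps(2) that unfolding A_def disjoint_family_on_def by fastforce
  then have \<delta>S: "\<delta> v \<subseteq> E'" if "v \<in> S" for v
    using insert.prems(2)[of v] that unfolding E'_def by blast
  define mw where "mw z = max (noise_weight e A z) (noise_weight e A (A - z))" for z
  define u' where "u' z Y = u (z \<union> Y) + u ((A - z) \<union> Y)" for z Y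
  have IH: "(\<Sum>Y\<in>Pow E'. noise_weight e E' Y * u' z Y) \<le> (\<Prod>v\<in>S. flip_max_mass e (\<delta> v) / 2)"
    if "z \<subseteq> A" for z
  proof (rule insert.IH[OF A(4) \<delta>S])
    show "disjoint_family_on \<delta> S" using insert.prems(3) disjoint_family_on_mono by blast
    fix Y assume "Y \<subseteq> E'"
    then have "Y \<inter> \<delta> a = {}" using A(2) unfolding A_def by blast
    then have "(\<Sum>T\<in>Pow (insert a S). u (sym_diff (z \<union> Y) (\<Union>(\<delta> ` T))))
        = (\<Sum>T\<in>Pow S. u' z (sym_diff Y (\<Union>(\<delta> ` T))))"
      unfolding u'_def A_def
      by (rule sum_Pow_insert_sym_diff[where \<delta> = \<delta>, OF insert.hyps that[unfolded A_def] _ \<delta>A[unfolded A_def]])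
    moreover have "(\<Sum>T\<in>Pow (insert a S). u (sym_diff (z \<union> Y) (\<Union>(\<delta> ` T)))) \<le> 1"
      using insert.prems(4) that \<open>Y \<subseteq> E'\<close> A(3) by blast
    ultimately show "(\<Sum>T\<in>Pow S. u' z (sym_diff Y (\<Union>(\<delta> ` T)))) \<le> 1"
      by simp
  qed (use insert.prems in \<open>auto simp: u'_def\<close>)
  have "(\<Sum>Z\<in>Pow E. noise_weight e E Z * u Z)
      \<le> (\<Sum>z\<in>Pow A. mw z * (\<Sum>Y\<in>Pow E'. noise_weight e E' Y * u' z Y)) / 2"
    unfolding A(3) mw_def u'_def
    by (rule sum_noise_weight_Un_le_flip_max[OF A(1,4,2) insert.prems(5-7)])
  also have "\<dots> \<le> (\<Sum>z\<in>Pow A. mw z * (\<Prod>v\<in>S. flip_max_mass e (\<delta> v) / 2)) / 2"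
    using IH insert.prems(6,7) unfolding mw_def
    by (intro divide_right_mono sum_mono mult_left_mono) (auto intro: max.coboundedI1 noise_weight_nonneg)
  also have "\<dots> = (\<Prod>v\<in>insert a S. flip_max_mass e (\<delta> v) / 2)"
    using insert.hyps by (simp add: flip_max_mass_def mw_def A_def sum_distrib_right[symmetric])
  finally show ?case .
qed

section \<open>Central binomial bound on the flip mass\<close>

lemma central_binomial_Suc:
  "Suc n * ((2 * Suc n) choose Suc n) = 2 * Suc (2 * n) * ((2 * n) choose n)"
proof -
  have "Suc n * ((2 * Suc n) choose Suc n) = Suc (Suc (2 * n)) * (Suc (2 * n) choose n)"
    using Suc_times_binomial[of n "Suc (2 * n)"] by simp
  also have "Suc (2 * n) choose n = Suc (2 * n) choose Suc n"
    using central_binomial_odd[of "Suc (2 * n)"] by simp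
  also have "Suc (Suc (2 * n)) * (Suc (2 * n) choose Suc n) = 2 * (Suc n * (Suc (2 * n) choose Suc n))"
    by simp
  also have "Suc n * (Suc (2 * n) choose Suc n) = Suc (2 * n) * ((2 * n) choose n)"
    by (rule Suc_times_binomial)
  finally show ?thesis by simp
qed

lemma central_binomial_lower_bound_sqrt:
  assumes "n > 0"
  shows "4 ^ n / (2 * sqrt (real n)) \<le> real ((2 * n) choose n)"
proof -
  have "16 ^ n \<le> 4 * real n * real ((2 * n) choose n) ^ 2"
    using assms
  proof (induction n rule: nat_induct_non_zero)
    case 1 then show ?case by simp
  next
    case (Suc n)
    define C where "C = real ((2 * n) choose n)"
    define C' where "C' = real ((2 * Suc n) choose Suc n)"
    have rec: "real (Suc n) * C' = 2 * (2 * real n + 1) * C"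
      unfolding C_def C'_def using arg_cong[OF central_binomial_Suc[of n], of real]
      by (simp del: binomial_Suc_Suc add: algebra_simps)
    have "real (Suc n) * 16 ^ Suc n = 16 * real (Suc n) * 16 ^ n"
      by simp
    also have "\<dots> \<le> 16 * real (Suc n) * (4 * real n * C ^ 2)"
      using Suc.IH unfolding C_def by (intro mult_left_mono) auto
    also have "\<dots> \<le> 16 * (2 * real n + 1) ^ 2 * C ^ 2"
      by (simp add: power2_eq_square algebra_simps mult_right_mono)
    also have "\<dots> = 4 * (2 * (2 * real n + 1) * C) ^ 2"
      by (simp add: power2_eq_square algebra_simps)
    also have "\<dots> = real (Suc n) * (4 * real (Suc n) * C' ^ 2)"
      unfolding rec[symmetric] by (simp add: power_mult_distrib power2_eq_square)
    finally show ?case unfolding C'_def by (simp del: of_nat_Suc binomial_Suc_Suc)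
  qed
  also have "\<dots> = (2 * sqrt (real n) * real ((2 * n) choose n)) ^ 2"
    by (simp add: power_mult_distrib)
  finally have "(4 ^ n) ^ 2 \<le> (2 * sqrt (real n) * real ((2 * n) choose n)) ^ 2"
    by (simp add: power2_eq_square power_mult_distrib[symmetric])
  then have "4 ^ n \<le> 2 * sqrt (real n) * real ((2 * n) choose n)"
    by (rule power2_le_imp_le) simp
  then show ?thesis using assms by (simp add: field_simps)
qed

lemma central_binomial_le_twice_binomial:
  "(2 * ((k + 1) div 2)) choose ((k + 1) div 2) \<le> 2 * (k choose ((k + 1) div 2))"
proof (cases "even k")
  case False
  then obtain j where k: "k = Suc (2 * j)" by (metis oddE Suc_eq_plus1)
  then show ?thesis
    using central_binomial_odd[of k] binomial_Suc_Suc[of "Suc (2 * j)" j] by simp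
qed auto

lemma flip_max_mass_eq:
  assumes "finite A"
  shows "flip_max_mass e A = 2 - (\<Sum>z\<in>Pow A. min (noise_weight e A z) (noise_weight e A (A - z)))"
proof -
  have "max a b = a + b - min a b" for a b :: real by (simp add: max_def min_def)
  then show ?thesis
    unfolding flip_max_mass_def
    by (simp add: sum_subtractf sum.distrib sum_Pow_Diff[OF assms] sum_noise_weight[OF assms])
qed

lemma flip_max_mass_le_central_binomial:
  assumes "finite A" "0 \<le> e" "e \<le> 1/2" "m = (card A + 1) div 2"
  shows "flip_max_mass e A \<le> 2 - real ((2 * m) choose m) * (e * (1 - e)) ^ m / 2"
proof -
  define W where "W = {z. z \<subseteq> A \<and> card z = m}"
  have min_ge: "(e * (1 - e)) ^ m \<le> min (noise_weight e A z) (noise_weight e A (A - z))"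
    if "z \<in> W" for z
  proof -
    have "card (A - z) \<le> m" "card (A - (A - z)) = m" "card z = m"
      using that assms by (auto simp: W_def card_Diff_subset finite_subset Diff_Diff_Int Int_absorb1)
    moreover have "e ^ m * (1 - e) ^ m \<le> e ^ i * (1 - e) ^ m"
      "e ^ m * (1 - e) ^ m \<le> e ^ m * (1 - e) ^ i" if "i \<le> m" for i
      using that assms by (auto intro!: mult_right_mono mult_left_mono power_decreasing)
    ultimately show ?thesis
      by (simp add: noise_weight_def power_mult_distrib)
  qed
  have "real ((2 * m) choose m) \<le> 2 * real (card A choose m)"
    using central_binomial_le_twice_binomial[of "card A"] unfolding assms(4) of_nat_le_iff
    by (metis of_nat_le_iff of_nat_mult of_nat_numeral)
  moreover have "0 \<le> (e * (1 - e)) ^ m" using assms by simp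
  ultimately have "real ((2 * m) choose m) * (e * (1 - e)) ^ m / 2 \<le> real (card A choose m) * (e * (1 - e)) ^ m"
    using mult_right_mono by fastforce
  also have "\<dots> = (\<Sum>z\<in>W. (e * (1 - e)) ^ m)"
    using n_subsets[OF assms(1), of m] by (simp add: W_def)
  also have "\<dots> \<le> (\<Sum>z\<in>W. min (noise_weight e A z) (noise_weight e A (A - z)))"
    by (rule sum_mono[OF min_ge])
  also have "\<dots> \<le> (\<Sum>z\<in>Pow A. min (noise_weight e A z) (noise_weight e A (A - z)))"
    using assms by (intro sum_mono2) (auto simp: W_def intro: noise_weight_nonneg)
  finally show ?thesis
    unfolding flip_max_mass_eq[OF assms(1)] by simp
qed

section \<open>The divergence D(1/2 || eps)\<close>

lemma KL_half_eq:
  assumes "0 < e" "e < 1/2"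
  shows "KL_half e = - ln (4 * e * (1 - e)) / 2"
proof -
  have "ln (4 * e * (1 - e)) = ln (2 * e) + ln (2 * (1 - e))"
    using assms ln_mult[of "2 * e" "2 * (1 - e)"] by (simp add: mult_ac)
  then show ?thesis using assms by (simp add: KL_half_def ln_div)
qed

lemma exp_KL_half:
  assumes "0 < e" "e < 1/2"
  shows "exp (- 2 * KL_half e) = 4 * e * (1 - e)"
  using assms by (simp add: KL_half_eq)

lemma KL_half_pos:
  assumes "0 < e" "e < 1/2"
  shows "0 < KL_half e"
proof -
  have "4 * e * (1 - e) = 1 - (1 - 2 * e) ^ 2" by (simp add: power2_eq_square algebra_simps)
  then have "4 * e * (1 - e) < 1" using assms by simp
  then show ?thesis using assms by (simp add: KL_half_eq)
qed

lemma KL_half_le: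
  assumes "0 < e" "e < 1/2"
  shows "2 * (1 - (1 - 2 * e) ^ 2) * KL_half e \<le> (1 - 2 * e) ^ 2"
proof -
  define y where "y = 1 - (1 - 2 * e) ^ 2"
  have y: "y = 4 * e * (1 - e)" "0 < y" using assms by (auto simp: y_def power2_eq_square algebra_simps)
  have "2 * y * KL_half e = y * ln (1 / y)"
    using assms y by (simp add: KL_half_eq ln_div)
  also have "\<dots> \<le> y * (1 / y - 1)"
    using y(2) by (intro mult_left_mono ln_le_minus_one) auto
  also have "\<dots> = (1 - 2 * e) ^ 2"
    using y(2) by (simp add: y_def field_simps)
  finally show ?thesis by (simp add: y_def)
qed

lemma flip_max_mass_le_exp_KL_half:
  assumes "finite A" "0 < e" "e < 1/2" "card A \<le> K"
  shows "flip_max_mass e A \<le> 2 - exp (- ((real K + 1) * KL_half e)) / (4 * sqrt (real K + 1))"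
proof -
  define m where "m = (card A + 1) div 2"
  define B where "B = real ((2 * m) choose m) * (e * (1 - e)) ^ m"
  have "2 * real m \<le> real K + 1" using assms(4) unfolding m_def by linarith
  then have "2 * real m * KL_half e \<le> (real K + 1) * KL_half e"
    using KL_half_pos[OF assms(2,3)] by (intro mult_right_mono) auto
  then have "exp (- ((real K + 1) * KL_half e)) \<le> exp (- 2 * real m * KL_half e)"
    by (simp add: algebra_simps)
  also have "\<dots> = exp (- 2 * KL_half e) ^ m"
    by (simp add: exp_of_nat_mult[symmetric] mult_ac)
  also have "\<dots> = 4 ^ m * (e * (1 - e)) ^ m"
    unfolding exp_KL_half[OF assms(2,3)] by (simp only: power_mult_distrib[symmetric] mult.assoc)
  finally have exp_le: "exp (- ((real K + 1) * KL_half e)) \<le> 4 ^ m * (e * (1 - e)) ^ m" .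
  have "(4::real) ^ m \<le> 2 * sqrt (real K + 1) * real ((2 * m) choose m)"
  proof (cases "m = 0")
    case False
    have "(4::real) ^ m \<le> 2 * sqrt (real m) * real ((2 * m) choose m)"
      using central_binomial_lower_bound_sqrt[of m] False by (simp add: field_simps)
    also have "\<dots> \<le> 2 * sqrt (real K + 1) * real ((2 * m) choose m)"
      using assms by (intro mult_right_mono) (auto simp: m_def)
    finally show ?thesis .
  qed (simp add: order.trans[OF _ mult_left_mono[of 1 "sqrt (real K + 1)" 2]])
  then have "4 ^ m * (e * (1 - e)) ^ m \<le> 2 * sqrt (real K + 1) * B"
    using assms unfolding B_def by (simp add: mult_right_mono mult.assoc)
  then have "exp (- ((real K + 1) * KL_half e)) / (2 * sqrt (real K + 1)) \<le> B"
    using exp_le by (simp add: divide_le_eq mult_ac)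
  moreover have "flip_max_mass e A \<le> 2 - B / 2"
    using flip_max_mass_le_central_binomial[OF assms(1) _ _ m_def] assms by (simp add: B_def)
  ultimately show ?thesis by simp
qed

section \<open>Independent sets of low-degree vertices\<close>

definition incident_edges :: "('a \<times> 'a) set \<Rightarrow> 'a \<Rightarrow> ('a \<times> 'a) set" where
  "incident_edges E v = {e \<in> E. fst e = v \<or> snd e = v}"

definition neighbours :: "('a \<times> 'a) set \<Rightarrow> 'a \<Rightarrow> 'a set" where
  "neighbours E v = {w. (v, w) \<in> E \<or> (w, v) \<in> E}"

definition independent_set :: "('a \<times> 'a) set \<Rightarrow> 'a set \<Rightarrow> bool" where
  "independent_set E S \<longleftrightarrow> (\<forall>(i, j)\<in>E. i \<notin> S \<or> j \<notin> S)"

lemma simple_graph_finite: "simple_graph n E \<Longrightarrow> finite E"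
  unfolding simple_graph_def
  by (rule finite_subset[of _ "{..<n} \<times> {..<n}"]) auto

lemma card_neighbours_le:
  assumes "finite E"
  shows "finite (neighbours E v)" "card (neighbours E v) \<le> card (incident_edges E v)"
proof -
  define other_end where "other_end e = (if fst e = v then snd e else fst e)" for e :: "'a \<times> 'a"
  have "neighbours E v \<subseteq> other_end ` incident_edges E v"
  proof
    fix w assume "w \<in> neighbours E v"
    then consider "(v, w) \<in> E" | "(w, v) \<in> E" unfolding neighbours_def by blast
    then show "w \<in> other_end ` incident_edges E v"
    proof cases
      case 1
      then show ?thesis by (intro rev_image_eqI[of "(v, w)"]) (auto simp: incident_edges_def other_end_def)
    next
      case 2
      then show ?thesis by (intro rev_image_eqI[of "(w, v)"]) (auto simp: incident_edges_def other_end_def)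
    qed
  qed
  moreover have "finite (incident_edges E v)"
    using assms unfolding incident_edges_def by simp
  ultimately show "finite (neighbours E v)" "card (neighbours E v) \<le> card (incident_edges E v)"
    by (simp_all add: finite_surj surj_card_le)
qed

lemma independent_set_insert:
  assumes "simple_graph n E" "independent_set E S" "S \<inter> neighbours E v = {}"
  shows "independent_set E (insert v S)"
  using assms unfolding simple_graph_def independent_set_def neighbours_def by fastforce

lemma greedy_independent_set:
  assumes "simple_graph n E" "finite L" "\<And>v. v \<in> L \<Longrightarrow> card (incident_edges E v) \<le> K"
  shows "\<exists>S\<subseteq>L. independent_set E S \<and> card L \<le> (K + 1) * card S"
  using assms(2,3)
proof (induction L rule: finite_psubset_induct)
  case (psubset L)
  show ?case
  proof (cases "L = {}")
    case True
    then show ?thesis by (auto simp: independent_set_def)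
  next
    case False
    then obtain v where v: "v \<in> L" by auto
    define N where "N = insert v (neighbours E v)"
    have N: "finite N" "card N \<le> K + 1"
      using card_neighbours_le[OF simple_graph_finite[OF assms(1)], of v] psubset.prems[OF v]
      unfolding N_def by (auto intro: order.trans[OF card_insert_le_m1])
    obtain S where S: "S \<subseteq> L - N" "independent_set E S" "card (L - N) \<le> (K + 1) * card S"
      using psubset.IH[of "L - N"] psubset.prems v unfolding N_def by blast
    have "v \<notin> S" "finite S"
      using S(1) psubset.hyps finite_subset unfolding N_def by auto
    have "card L \<le> card ((L - N) \<union> N)"
      using psubset.hyps N(1) by (intro card_mono) auto
    also have "\<dots> \<le> card (L - N) + card N"
      by (rule card_Un_le)
    also have "\<dots> \<le> (K + 1) * card (insert v S)"
      using S(3) N(2) \<open>v \<notin> S\<close> \<open>finite S\<close> by simp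
    finally show ?thesis
      using independent_set_insert[OF assms(1) S(2)] S(1) v unfolding N_def by blast
  qed
qed

lemma card_filter_eq_sum: "finite A \<Longrightarrow> card {x \<in> A. P x} = (\<Sum>x\<in>A. if P x then 1 else 0)"
  unfolding card_eq_sum by (rule sum.inter_filter)

lemma sum_card_incident_edges:
  assumes "simple_graph n E"
  shows "(\<Sum>v<n. card (incident_edges E v)) = 2 * card E"
proof -
  have "(\<Sum>v<n. card (incident_edges E v)) = (\<Sum>e\<in>E. \<Sum>v<n. if fst e = v \<or> snd e = v then 1 else 0)"
    unfolding incident_edges_def card_filter_eq_sum[OF simple_graph_finite[OF assms]]
    by (rule sum.swap)
  also have "\<dots> = (\<Sum>e\<in>E. 2)"
  proof (rule sum.cong[OF refl])
    fix e assume "e \<in> E"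
    then have "fst e < snd e" "snd e < n" using assms unfolding simple_graph_def by auto
    then have "{v \<in> {..<n}. fst e = v \<or> snd e = v} = {fst e, snd e}" "card {fst e, snd e} = 2"
      by auto
    then show "(\<Sum>v<n. if fst e = v \<or> snd e = v then 1 else 0) = (2::nat)"
      using card_filter_eq_sum[of "{..<n}" "\<lambda>v. fst e = v \<or> snd e = v"] by simp
  qed
  finally show ?thesis by simp
qed

lemma card_low_degree_vertices:
  assumes "simple_graph n E"
  shows "real n - 2 * real (card E) / (real K + 1)
      \<le> real (card {v \<in> {..<n}. card (incident_edges E v) \<le> K})"
proof -
  define H where "H = {v \<in> {..<n}. \<not> card (incident_edges E v) \<le> K}"
  have "(K + 1) * card H = (\<Sum>v\<in>H. K + 1)"
    by simp
  also have "\<dots> \<le> (\<Sum>v\<in>H. card (incident_edges E v))"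
    by (rule sum_mono) (simp add: H_def)
  also have "\<dots> \<le> (\<Sum>v<n. card (incident_edges E v))"
    by (rule sum_mono2) (auto simp: H_def)
  also have "\<dots> = 2 * card E"
    by (rule sum_card_incident_edges[OF assms])
  finally have "real ((K + 1) * card H) \<le> real (2 * card E)"
    by (simp only: of_nat_le_iff)
  then have "real (card H) \<le> 2 * real (card E) / (real K + 1)"
    by (simp add: field_simps)
  moreover have "card {v \<in> {..<n}. card (incident_edges E v) \<le> K} + card H = n"
  proof -
    have "{v \<in> {..<n}. card (incident_edges E v) \<le> K} \<union> H = {..<n}"
      "{v \<in> {..<n}. card (incident_edges E v) \<le> K} \<inter> H = {}"
      unfolding H_def by auto
    then show ?thesis
      using card_Un_disjoint[of "{v \<in> {..<n}. card (incident_edges E v) \<le> K}" H] by (simp add: H_def)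
  qed
  ultimately show ?thesis by linarith
qed

lemma large_independent_set:
  assumes "simple_graph n E"
  obtains S where "S \<subseteq> {..<n}" "independent_set E S" "\<And>v. v \<in> S \<Longrightarrow> card (incident_edges E v) \<le> K"
    "real n - 2 * real (card E) / (real K + 1) \<le> (real K + 1) * real (card S)"
proof -
  define L where "L = {v \<in> {..<n}. card (incident_edges E v) \<le> K}"
  have "finite L" "\<And>v. v \<in> L \<Longrightarrow> card (incident_edges E v) \<le> K"
    unfolding L_def by auto
  then obtain S where "S \<subseteq> L" "independent_set E S" "card L \<le> (K + 1) * card S"
    using greedy_independent_set[OF assms] by blast
  moreover from this(3) have "real (card L) \<le> real ((K + 1) * card S)"
    by (simp only: of_nat_le_iff)
  ultimately show ?thesis
    using card_low_degree_vertices[OF assms, of K] by (intro that) (auto simp: L_def algebra_simps)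
qed

section \<open>Flip symmetry of the observation\<close>

definition correct_inputs ::
  "nat \<Rightarrow> (nat \<times> nat) set \<Rightarrow> ((nat \<times> nat \<Rightarrow> bool) \<Rightarrow> nat set) \<Rightarrow> (nat \<times> nat) set \<Rightarrow> nat set set"
where
  "correct_inputs n E dec Z =
     {X \<in> Pow {..<n}. dec (observation E X Z) = X \<or> dec (observation E X Z) = {..<n} - X}"

lemma success_prob_eq:
  assumes "finite E"
  shows "success_prob n E e dec
       = (\<Sum>Z\<in>Pow E. noise_weight e E Z * real (card (correct_inputs n E dec Z))) / 2 ^ n"
proof -
  have "card (E - Z) = card E - card Z" if "Z \<subseteq> E" for Z
    using assms that by (simp add: card_Diff_subset finite_subset)
  then show ?thesis
    unfolding success_prob_def correct_inputs_def noise_weight_def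
      card_filter_eq_sum[OF finite_Pow_iff[THEN iffD2, OF finite_lessThan]]
    by (subst sum.swap) (simp add: sum_distrib_left of_nat_sum if_distrib cong: if_cong)
qed

lemma observation_flip:
  assumes "independent_set E S" "T \<subseteq> S"
  shows "observation E (sym_diff X T) (sym_diff Z (\<Union>(incident_edges E ` T))) = observation E X Z"
proof
  fix p :: "nat \<times> nat"
  obtain i j where p: "p = (i, j)" by (cases p)
  show "observation E (sym_diff X T) (sym_diff Z (\<Union>(incident_edges E ` T))) p = observation E X Z p"
  proof (cases "(i, j) \<in> E")
    case True
    then have "\<not> (i \<in> T \<and> j \<in> T)" "(i, j) \<in> \<Union>(incident_edges E ` T) \<longleftrightarrow> i \<in> T \<or> j \<in> T"
      using assms unfolding independent_set_def incident_edges_def by auto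
    then show ?thesis unfolding p observation_def using True by auto
  qed (simp add: p observation_def)
qed

lemma card_filter_inj_on_le_1:
  assumes "finite A" "inj_on f A"
  shows "card {x \<in> A. f x = b} \<le> 1"
  using assms by (simp add: card_le_Suc0_iff_eq inj_on_def)

text \<open>Along the orbit of the flips of a subset of an independent set, a fixed observation, hence
  a fixed decoder output, can be correct for at most two of the flipped inputs.\<close>
lemma sum_card_correct_inputs_orbit:
  assumes "independent_set E S" "S \<subseteq> {..<n}"
  shows "(\<Sum>T\<in>Pow S. card (correct_inputs n E dec (sym_diff Z (\<Union>(incident_edges E ` T))))) \<le> 2 * 2 ^ n"
proof -
  define V where "V = {..<n :: nat}"
  define D where "D X = dec (observation E X Z)" for X
  have "finite S" using assms(2) finite_subset by blast
  have "card (correct_inputs n E dec (sym_diff Z (\<Union>(incident_edges E ` T))))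
      = (\<Sum>X\<in>Pow V. if D X = sym_diff X T \<or> D X = V - sym_diff X T then 1 else 0)"
    if "T \<in> Pow S" for T
  proof -
    have "bij_betw (\<lambda>X. sym_diff X T) (Pow V) (Pow V)"
      using that assms(2) unfolding V_def by (intro bij_betwI[where g = "\<lambda>X. sym_diff X T"]) auto
    then show ?thesis
      unfolding correct_inputs_def card_filter_eq_sum[OF finite_Pow_iff[THEN iffD2, OF finite_lessThan]]
      using observation_flip[OF assms(1), of T X Z for X] that
      by (subst sum.reindex_bij_betw[symmetric]) (auto simp: D_def V_def)
  qed
  then have "(\<Sum>T\<in>Pow S. card (correct_inputs n E dec (sym_diff Z (\<Union>(incident_edges E ` T)))))
      = (\<Sum>T\<in>Pow S. \<Sum>X\<in>Pow V. if D X = sym_diff X T \<or> D X = V - sym_diff X T then 1 else 0)"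
    by (rule sum.cong[OF refl])
  also have "\<dots> = (\<Sum>X\<in>Pow V. \<Sum>T\<in>Pow S. if D X = sym_diff X T \<or> D X = V - sym_diff X T then 1 else 0)"
    by (rule sum.swap)
  also have "\<dots> = (\<Sum>X\<in>Pow V. card {T \<in> Pow S. D X = sym_diff X T \<or> D X = V - sym_diff X T})"
    using \<open>finite S\<close> by (simp only: card_filter_eq_sum finite_Pow_iff)
  also have "\<dots> \<le> (\<Sum>X\<in>Pow V. 2)"
  proof (rule sum_mono)
    fix X assume "X \<in> Pow V"
    have "inj_on (\<lambda>T. sym_diff X T) (Pow S)" "inj_on (\<lambda>T. V - sym_diff X T) (Pow S)"
      using \<open>X \<in> Pow V\<close> assms(2) unfolding V_def inj_on_def by blast+
    then have "card {T \<in> Pow S. sym_diff X T = D X} \<le> 1" "card {T \<in> Pow S. V - sym_diff X T = D X} \<le> 1"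
      using \<open>finite S\<close> by (intro card_filter_inj_on_le_1; simp)+
    moreover have "{T \<in> Pow S. D X = sym_diff X T \<or> D X = V - sym_diff X T}
        = {T \<in> Pow S. sym_diff X T = D X} \<union> {T \<in> Pow S. V - sym_diff X T = D X}"
      by auto
    ultimately show "card {T \<in> Pow S. D X = sym_diff X T \<or> D X = V - sym_diff X T} \<le> 2"
      by (metis (no_types, lifting) card_Un_le add_mono one_add_one order_trans)
  qed
  finally show ?thesis by (simp add: V_def card_Pow)
qed

lemma disjoint_family_on_incident_edges:
  assumes "independent_set E S"
  shows "disjoint_family_on (incident_edges E) S"
  using assms unfolding disjoint_family_on_def independent_set_def incident_edges_def by fastforce

lemma incident_edges_subset: "incident_edges E v \<subseteq> E"
  by (auto simp: incident_edges_def)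

lemma success_prob_le_prod_flip_max_mass:
  assumes "simple_graph n E" "0 \<le> e" "e \<le> 1" "independent_set E S" "S \<subseteq> {..<n}"
  shows "success_prob n E e dec \<le> 2 * (\<Prod>v\<in>S. flip_max_mass e (incident_edges E v) / 2)"
proof -
  have "finite E" using simple_graph_finite[OF assms(1)] .
  define u where "u Z = real (card (correct_inputs n E dec Z)) / 2 ^ (n + 1)" for Z
  have "(\<Sum>Z\<in>Pow E. noise_weight e E Z * u Z) \<le> (\<Prod>v\<in>S. flip_max_mass e (incident_edges E v) / 2)"
  proof (rule noise_expectation_le_prod_flip_max_mass)
    show "(\<Sum>T\<in>Pow S. u (sym_diff Z (\<Union>(incident_edges E ` T)))) \<le> 1" for Z
      using of_nat_mono[OF sum_card_correct_inputs_orbit[OF assms(4,5), of dec Z], where 'a = real]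
      unfolding u_def sum_divide_distrib[symmetric] by simp
  qed (use assms \<open>finite E\<close> finite_subset[OF assms(5)] disjoint_family_on_incident_edges[OF assms(4)]
     in \<open>auto simp: u_def incident_edges_subset\<close>)
  moreover have "success_prob n E e dec = 2 * (\<Sum>Z\<in>Pow E. noise_weight e E Z * u Z)"
    unfolding success_prob_eq[OF \<open>finite E\<close>] u_def
    by (simp add: sum_divide_distrib[symmetric] sum_distrib_left[symmetric] field_simps)
  ultimately show ?thesis by simp
qed

lemma success_prob_le_exp:
  assumes "simple_graph n E" "0 < e" "e < 1/2" "independent_set E S" "S \<subseteq> {..<n}"
    and "\<And>v. v \<in> S \<Longrightarrow> card (incident_edges E v) \<le> K"
  shows "success_prob n E e dec
       \<le> 2 * exp (- real (card S) * exp (- ((real K + 1) * KL_half e)) / (8 * sqrt (real K + 1)))"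
proof -
  define p where "p = exp (- ((real K + 1) * KL_half e)) / (8 * sqrt (real K + 1))"
  have "flip_max_mass e (incident_edges E v) / 2 \<le> exp (- p)" if "v \<in> S" for v
  proof -
    have "finite (incident_edges E v)"
      using simple_graph_finite[OF assms(1)] by (simp add: incident_edges_def)
    then have "flip_max_mass e (incident_edges E v) / 2 \<le> 1 - p"
      using flip_max_mass_le_exp_KL_half[OF _ assms(2,3) assms(6)[OF that]] by (simp add: p_def)
    also have "\<dots> \<le> exp (- p)"
      using exp_ge_add_one_self[of "- p"] by simp
    finally show ?thesis .
  qed
  moreover have "0 \<le> flip_max_mass e A" for A :: "(nat \<times> nat) set"
    using assms(2,3) by (simp add: flip_max_mass_nonneg)
  ultimately have "(\<Prod>v\<in>S. flip_max_mass e (incident_edges E v) / 2) \<le> exp (- p) ^ card S"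
    using prod_mono[of S "\<lambda>v. flip_max_mass e (incident_edges E v) / 2" "\<lambda>_. exp (- p)"] by simp
  also have "\<dots> = exp (- real (card S) * p)"
    by (simp add: exp_of_nat_mult[symmetric])
  finally show ?thesis
    using success_prob_le_prod_flip_max_mass[OF assms(1) _ _ assms(4,5), of e dec] assms(2,3)
    by (simp add: p_def)
qed

section \<open>Asymptotics\<close>

lemma card_independent_set_le_if_success:
  assumes "simple_graph n E" "0 < e" "e < 1/2" "independent_set E S" "S \<subseteq> {..<n}"
    and "\<And>v. v \<in> S \<Longrightarrow> card (incident_edges E v) \<le> K"
    and "1/2 \<le> success_prob n E e dec"
  shows "real (card S) \<le> 8 * ln 4 * sqrt (real K + 1) * exp ((real K + 1) * KL_half e)"
proof -
  define x where "x = (real K + 1) * KL_half e"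
  have "success_prob n E e dec \<le> 2 * exp (- real (card S) * (exp (- x) / (8 * sqrt (real K + 1))))"
    using success_prob_le_exp[OF assms(1-6), of dec] unfolding x_def by simp
  then have "1/4 \<le> exp (- real (card S) * (exp (- x) / (8 * sqrt (real K + 1))))"
    using assms(7) by linarith
  then have "ln (1/4) \<le> - real (card S) * (exp (- x) / (8 * sqrt (real K + 1)))"
    by (metis exp_gt_zero ln_exp ln_mono zero_less_divide_1_iff zero_less_numeral)
  then have "real (card S) * exp (- x) \<le> 8 * ln 4 * sqrt (real K + 1)"
    by (simp add: ln_div field_simps)
  then have "real (card S) * exp (- x) * exp x \<le> 8 * ln 4 * sqrt (real K + 1) * exp x"
    by (rule mult_right_mono) simp
  moreover have "real (card S) * exp (- x) * exp x = real (card S)"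
    by (simp add: exp_minus)
  ultimately show ?thesis
    unfolding x_def[symmetric] by linarith
qed

lemma ln_le_if_success:
  assumes "simple_graph n E" "0 < e" "e < 1/2" "0 < \<delta>" "0 < n"
    and "1/2 \<le> success_prob n E e dec"
  defines "d \<equiv> avg_degree n E"
  shows "ln n + ln (\<delta> / (1 + \<delta>))
       \<le> ln (8 * ln 4) + 3/2 * ln ((1 + \<delta>) * d + 1) + ((1 + \<delta>) * d + 1) * KL_half e"
proof -
  define K where "K = nat \<lfloor>(1 + \<delta>) * d\<rfloor>"
  define A where "A = real K + 1"
  have d0: "0 \<le> (1 + \<delta>) * d" using assms(4) by (simp add: d_def avg_degree_def)
  then have "real K = of_int \<lfloor>(1 + \<delta>) * d\<rfloor>" unfolding K_def by (intro of_nat_nat) simp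
  moreover note floor_correct[of "(1 + \<delta>) * d"]
  ultimately have A: "(1 + \<delta>) * d < A" "A \<le> (1 + \<delta>) * d + 1" "1 \<le> A"
    using d0 unfolding A_def by auto
  obtain S where S: "S \<subseteq> {..<n}" "independent_set E S" "\<And>v. v \<in> S \<Longrightarrow> card (incident_edges E v) \<le> K"
    "real n - 2 * real (card E) / A \<le> A * real (card S)"
    using large_independent_set[OF assms(1), of K] unfolding A_def by blast
  have "d / A \<le> 1 / (1 + \<delta>)"
    using A assms(4) by (simp add: field_simps)
  then have "2 * real (card E) / A \<le> real n / (1 + \<delta>)"
    using assms(5) mult_left_mono[of "d / A" "1 / (1 + \<delta>)" "real n"]
    by (simp add: d_def avg_degree_def)
  moreover have "real n * (\<delta> / (1 + \<delta>)) = real n - real n / (1 + \<delta>)"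
    using assms(4) by (simp add: field_simps)
  ultimately have "real n * (\<delta> / (1 + \<delta>)) \<le> A * real (card S)"
    using S(4) by linarith
  also have "\<dots> \<le> A * (8 * ln 4 * sqrt A * exp (A * KL_half e))"
    using card_independent_set_le_if_success[OF assms(1-3) S(2,1,3) assms(6)] A(3)
    unfolding A_def by (intro mult_left_mono) auto
  finally have "real n * (\<delta> / (1 + \<delta>)) \<le> 8 * ln 4 * (A * sqrt A) * exp (A * KL_half e)"
    by (simp add: mult_ac)
  then have "ln (real n * (\<delta> / (1 + \<delta>))) \<le> ln (8 * ln 4 * (A * sqrt A) * exp (A * KL_half e))"
    using assms(4,5) by (intro ln_mono) auto
  moreover have "ln (real n * (\<delta> / (1 + \<delta>))) = ln n + ln (\<delta> / (1 + \<delta>))"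
    using assms(4,5) by (intro ln_mult_pos) auto
  moreover have "ln (8 * ln 4 * (A * sqrt A) * exp (A * KL_half e)) = ln (8 * ln 4) + 3/2 * ln A + A * KL_half e"
    using A(3) by (simp add: ln_mult ln_sqrt)
  ultimately have "ln n + ln (\<delta> / (1 + \<delta>)) \<le> ln (8 * ln 4) + 3/2 * ln A + A * KL_half e"
    by linarith
  moreover have "ln A \<le> ln ((1 + \<delta>) * d + 1)" "A * KL_half e \<le> ((1 + \<delta>) * d + 1) * KL_half e"
    using A KL_half_pos[OF assms(2,3)] by (simp_all add: mult_right_mono)
  ultimately show ?thesis by linarith
qed

lemma eventually_ln_ge: "\<forall>\<^sub>F n in sequentially. X \<le> ln (real n)"
  using filterlim_compose[OF ln_at_top filterlim_real_sequentially] by (simp add: filterlim_at_top)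

lemma degree_bound_from_ln_bound:
  fixes a c d D L :: real
  assumes "0 < c" "0 < D" "0 < L" "a \<le> 1" "a * L - c / 2 * L \<le> ((1 + c / 2) * d + 1) * D"
  shows "(a - c) / D - 1 / L \<le> d / L"
proof -
  have "c / 2 * ((a - c) * L) \<le> c / 2 * L"
    using assms by (intro mult_left_mono) auto
  moreover have "0 \<le> c / 2 * D" using assms(1,2) by simp
  ultimately have "(1 + c / 2) * ((a - c) * L - D) \<le> (1 + c / 2) * (d * D)"
    using assms(5) by (simp add: algebra_simps add_divide_distrib)
  then have "(a - c) * L - D \<le> d * D"
    using assms(1) by simp
  have "(a - c) / D - 1 / L = ((a - c) * L - D) / (L * D)"
    using assms(2,3) by (simp add: field_simps)
  also have "\<dots> \<le> d * D / (L * D)"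
    using \<open>(a - c) * L - D \<le> d * D\<close> assms(2,3) by (intro divide_right_mono) auto
  also have "\<dots> = d / L"
    using assms(2) by simp
  finally show ?thesis .
qed

lemma eventually_degree_bound:
  fixes G :: "nat \<Rightarrow> (nat \<times> nat) set" and eps :: "nat \<Rightarrow> real"
  assumes "\<And>n. simple_graph n (G n)" "\<And>n. 0 < eps n \<and> eps n < 1/2" "0 \<le> \<tau>"
    and "\<And>n. avg_degree n (G n) \<le> real n powr \<tau>"
    and "\<forall>\<^sub>F n in sequentially. 1/2 \<le> success_prob n (G n) (eps n) (dec n)"
    and "0 < c"
  shows "\<forall>\<^sub>F n in sequentially. (1 - 3 * \<tau> / 2 - c) / KL_half (eps n) - 1 / ln (real n)
                                \<le> avg_degree n (G n) / ln (real n)"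
proof -
  define \<delta> where "\<delta> = c / 2"
  define C where "C = ln (8 * ln 4) + 3/2 * ln (2 + \<delta>) - ln (\<delta> / (1 + \<delta>))"
  show ?thesis
    using eventually_ge_at_top[of 1] assms(5) eventually_ln_ge[of "C / \<delta>"] eventually_ln_ge[of 1]
  proof eventually_elim
    case (elim n)
    define a where "a = 1 - 3 * \<tau> / 2"
    define d where "d = avg_degree n (G n)"
    define D where "D = KL_half (eps n)"
    define L where "L = ln (real n)"
    have e: "0 < eps n" "eps n < 1/2" "0 < D" using assms(2) KL_half_pos unfolding D_def by auto
    have "0 < \<delta>" "C \<le> \<delta> * L" using elim assms(6) by (auto simp: \<delta>_def L_def field_simps)
    have "0 < L" using elim unfolding L_def by linarith
    have "0 \<le> d" by (simp add: d_def avg_degree_def)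
    have "1 \<le> real n powr \<tau>" using elim assms(3) by (intro ge_one_powr_ge_zero) auto
    moreover have "(1 + \<delta>) * d \<le> (1 + \<delta>) * real n powr \<tau>"
      using assms(4)[of n] \<open>0 < \<delta>\<close> unfolding d_def by (intro mult_left_mono) auto
    ultimately have "(1 + \<delta>) * d + 1 \<le> (2 + \<delta>) * real n powr \<tau>"
      by (simp add: algebra_simps)
    then have "ln ((1 + \<delta>) * d + 1) \<le> ln ((2 + \<delta>) * real n powr \<tau>)"
      using \<open>0 < \<delta>\<close> \<open>0 \<le> d\<close> by (intro ln_mono) (auto intro: add_nonneg_pos)
    also have "\<dots> = ln (2 + \<delta>) + \<tau> * L"
      using \<open>0 < \<delta>\<close> elim by (simp add: ln_mult_pos L_def)
    finally have "ln ((1 + \<delta>) * d + 1) \<le> ln (2 + \<delta>) + \<tau> * L" .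
    moreover have "ln n + ln (\<delta> / (1 + \<delta>))
        \<le> ln (8 * ln 4) + 3/2 * ln ((1 + \<delta>) * d + 1) + ((1 + \<delta>) * d + 1) * D"
      using ln_le_if_success[OF assms(1)[of n] e(1,2) \<open>0 < \<delta>\<close>, of "dec n"] elim
      unfolding d_def D_def by simp
    ultimately have "a * L - \<delta> * L \<le> ((1 + \<delta>) * d + 1) * D"
      using \<open>C \<le> \<delta> * L\<close> unfolding C_def a_def L_def by (simp add: algebra_simps)
    then show ?case
      using degree_bound_from_ln_bound[OF assms(6) e(3) \<open>0 < L\<close>] assms(3)
      unfolding a_def d_def D_def L_def \<delta>_def by simp
  qed
qed

lemma degree_bound_near_half:
  fixes a c c' e L q :: real
  assumes "0 < e" "e < 1/2" "0 < c" "0 \<le> c'" "c' \<le> c / 8" "c' \<le> a" "a \<le> 1"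
    and "(1 - 2 * e) ^ 2 \<le> c / 8" "0 < L" "1 / L \<le> c / 4"
    and "(a - c') / KL_half e - 1 / L \<le> q"
  shows "(2 * a - c) / (1 - 2 * e) ^ 2 \<le> q"
proof -
  define x where "x = (1 - 2 * e) ^ 2"
  define D where "D = KL_half e"
  have x: "0 < x" "x \<le> 1" using assms(1,2) by (auto simp: x_def power_le_one)
  have D: "0 < D" "2 * (1 - x) * D \<le> x"
    using KL_half_pos[OF assms(1,2)] KL_half_le[OF assms(1,2)] unfolding x_def D_def by auto
  have "2 * (1 - x) \<le> x / D" using D by (simp add: field_simps)
  then have "2 * (1 - x) * (a - c') \<le> x / D * (a - c')"
    using assms(6) by (intro mult_right_mono) auto
  then have "2 * (1 - x) * (a - c') \<le> x * ((a - c') / D)"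
    by simp
  moreover have "x * ((a - c') / D - 1 / L) \<le> x * q"
    using assms(11) x(1) unfolding D_def by (intro mult_left_mono) auto
  then have "x * ((a - c') / D) - x * (1 / L) \<le> x * q"
    by (simp only: right_diff_distrib)
  moreover have "(a - c') * x \<le> x"
    using assms x by (intro mult_left_le_one_le) auto
  moreover have "x * (1 / L) \<le> 1 / L"
    using assms(9) x by (simp add: divide_right_mono)
  ultimately have "2 * a - c \<le> x * q"
    using assms(3,5,8,10) unfolding x_def[symmetric] by (simp add: algebra_simps)
  then show ?thesis
    unfolding x_def[symmetric] using x(1) by (simp add: pos_divide_le_eq mult.commute)
qed

lemma exists_smallo_slack:
  fixes f g h :: "nat \<Rightarrow> real"
  assumes "\<And>n. 0 < h n" "\<And>c. 0 < c \<Longrightarrow> \<forall>\<^sub>F n in sequentially. g n - c * h n \<le> f n"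
  shows "\<exists>r. r \<in> o(h) \<and> (\<forall>\<^sub>F n in sequentially. f n \<ge> g n + r n)"
proof (intro exI conjI)
  define r where "r n = min 0 (f n - g n)" for n
  show "r \<in> o(h)"
  proof (rule landau_o.smallI)
    fix c :: real assume "0 < c"
    from assms(2)[OF \<open>0 < c\<close>] show "\<forall>\<^sub>F n in sequentially. norm (r n) \<le> c * norm (h n)"
    proof eventually_elim
      case (elim n)
      moreover have "0 < c * h n" using \<open>0 < c\<close> assms(1) by simp
      ultimately show ?case using assms(1)[of n] by (auto simp: r_def min_def)
    qed
  qed
  show "\<forall>\<^sub>F n in sequentially. f n \<ge> g n + r n"
    by (intro always_eventually allI) (simp add: r_def min_def)
qed

lemma eventually_degree_bound_near_half:
  fixes eps q :: "nat \<Rightarrow> real"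
  assumes "eps \<longlonglongrightarrow> 1/2" "\<And>n. 0 < eps n \<and> eps n < 1/2" "0 < a" "a \<le> 1"
    and "\<And>c. 0 < c \<Longrightarrow> \<forall>\<^sub>F n in sequentially. (a - c) / KL_half (eps n) - 1 / ln (real n) \<le> q n"
    and "0 < c"
  shows "\<forall>\<^sub>F n in sequentially. 2 * a / (1 - 2 * eps n)^2 - c * (1 / (1 - 2 * eps n)^2) \<le> q n"
proof -
  define c' where "c' = min (c / 8) (a / 2)"
  have c': "0 < c'" "c' \<le> c / 8" "c' \<le> a"
    using assms(3,6) by (auto simp: c'_def min_le_iff_disj)
  have "(\<lambda>n. (1 - 2 * eps n)^2) \<longlonglongrightarrow> (1 - 2 * (1/2))^2"
    by (intro tendsto_intros assms(1))
  then have "(\<lambda>n. (1 - 2 * eps n)^2) \<longlonglongrightarrow> 0"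
    by simp
  then have "\<forall>\<^sub>F n in sequentially. (1 - 2 * eps n)^2 < c / 8"
    by (rule order_tendstoD(2)) (use assms(6) in simp)
  with assms(5)[OF c'(1)] eventually_ln_ge[of "4 / c"] eventually_ln_ge[of 1]
  show ?thesis
  proof eventually_elim
    case (elim n)
    then have "(2 * a - c) / (1 - 2 * eps n)^2 \<le> q n"
      using assms(2)[of n] assms(4,6) c'
      by (intro degree_bound_near_half[where c' = c' and L = "ln (real n)"]) (auto simp: field_simps)
    then show ?case
      by (simp add: diff_divide_distrib)
  qed
qed

theorem theorem1:
  fixes G :: "nat \<Rightarrow> (nat \<times> nat) set" and eps :: "nat \<Rightarrow> real" and \<tau> :: real
  assumes graphs: "\<And>n. simple_graph n (G n)"
    and eps_range: "\<And>n. 0 < eps n \<and> eps n < 1/2"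
    and tau: "0 < \<tau>" "\<tau> < 2/3"
    and deg: "\<And>n. avg_degree n (G n) \<le> real n powr \<tau>"
    and rec: "exact_recovery_whp G eps"
  shows "(\<exists>r. r \<in> o(\<lambda>n. 1 / KL_half (eps n)) \<and>
           (\<forall>\<^sub>F n in sequentially.
              avg_degree n (G n) / ln (real n)
                \<ge> (1 - 3 * \<tau> / 2) / KL_half (eps n) - 1 / ln (real n) + r n))
       \<and> ((eps \<longlonglongrightarrow> 1/2) \<longrightarrow>
           (\<exists>r. r \<in> o(\<lambda>n. 1 / (1 - 2 * eps n)^2) \<and>
             (\<forall>\<^sub>F n in sequentially.
                avg_degree n (G n) / ln (real n)
                  \<ge> 2 * (1 - 3 * \<tau> / 2) / (1 - 2 * eps n)^2 + r n)))"
proof -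
  define a where "a = 1 - 3 * \<tau> / 2"
  define q where "q n = avg_degree n (G n) / ln (real n)" for n
  obtain dec where lim: "(\<lambda>n. success_prob n (G n) (eps n) (dec n)) \<longlonglongrightarrow> 1"
    using rec unfolding exact_recovery_whp_def by blast
  then have "\<forall>\<^sub>F n in sequentially. 1/2 \<le> success_prob n (G n) (eps n) (dec n)"
    using order_tendstoD(1)[OF lim, of "1/2"] by (auto elim: eventually_mono)
  then have bound: "\<forall>\<^sub>F n in sequentially. (a - c) / KL_half (eps n) - 1 / ln (real n) \<le> q n"
    if "0 < c" for c
    using eventually_degree_bound[OF graphs eps_range _ deg _ that] tau unfolding a_def q_def by auto
  have "\<exists>r. r \<in> o(\<lambda>n. 1 / KL_half (eps n)) \<and>
      (\<forall>\<^sub>F n in sequentially. q n \<ge> a / KL_half (eps n) - 1 / ln (real n) + r n)"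
    using bound eps_range KL_half_pos
    by (intro exists_smallo_slack) (auto simp: diff_divide_distrib algebra_simps)
  moreover have "\<exists>r. r \<in> o(\<lambda>n. 1 / (1 - 2 * eps n)^2) \<and>
      (\<forall>\<^sub>F n in sequentially. q n \<ge> 2 * a / (1 - 2 * eps n)^2 + r n)"
    if "eps \<longlonglongrightarrow> 1/2"
  proof (rule exists_smallo_slack)
    show "0 < 1 / (1 - 2 * eps n)^2" for n
      using eps_range[of n] by simp
  qed (use eventually_degree_bound_near_half[OF that eps_range _ _ bound] tau in \<open>auto simp: a_def\<close>)
  ultimately show ?thesis unfolding a_def q_def by auto
qed

end
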